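(* Let $a,b>-1$, $n\ge2$, and $\lambda$ a partition with $\ell(\lambda)\le n$. In the expansion $$\mathfrak P_\lambda(x_1,\dots,x_{n-1},1;a,b)=\sum_{\nu:\ \ell(\nu)\le n-1}c_{\lambda\nu}\,\mathfrak P_\nu(x_1,\dots,x_{n-1};a,b)$$ all coefficients $c_{\lambda\nu}$ are nonnegative.
   Context: $\mathfrak p_l(x;a,b)$ ($l\ge0$) are the classical Jacobi polynomials orthogonal on $[-1,1]$ with weight $(1-x)^a(1+x)^b$, normalized by $\mathfrak p_l(x;a,b)=\frac{\Gamma(l+a+1)}{\Gamma(l+1)\Gamma(a+1)}{}_2F_1(-l,l+a+b+1;a+1;\frac{1-x}2)$. For $m\ge1$ and a partition $\nu$ with $\ell(\nu)\le m$, $\mathfrak P_\nu(x_1,\dots,x_m;a,b)=\det_{1\le i,j\le m}[\mathfrak p_{\nu_i+m-i}(x_j;a,b)]/\prod_{1\le i<j\le m}(x_i-x_j)$. These form a basis of symmetric polynomials in $x_1,\dots,x_m$, so the expansion exists and is unique. *)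

theory Defs
  imports "HOL-Analysis.Analysis"
begin

text \<open>One-variable Jacobi polynomial p_l(x;a,b), normalized as
  Gamma(l+a+1)/(Gamma(l+1) Gamma(a+1)) * 2F1(-l, l+a+b+1; a+1; (1-x)/2);
  the terminating hypergeometric series is written out as a finite sum.\<close>
definition jacobi :: "nat \<Rightarrow> real \<Rightarrow> real \<Rightarrow> real \<Rightarrow> real" where
  "jacobi l a b x =
     Gamma (real l + a + 1) / (Gamma (real l + 1) * Gamma (a + 1)) *
     (\<Sum>k\<le>l. pochhammer (- real l) k * pochhammer (real l + a + b + 1) k
              / (pochhammer (a + 1) k * fact k) * ((1 - x) / 2) ^ k)"

definition is_partition_len :: "nat \<Rightarrow> (nat \<Rightarrow> nat) \<Rightarrow> bool" where
  "is_partition_len m \<nu> \<longleftrightarrow>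
     (\<forall>i j. i \<le> j \<longrightarrow> \<nu> j \<le> \<nu> i) \<and> (\<forall>i\<ge>m. \<nu> i = 0)"

definition detm :: "nat \<Rightarrow> (nat \<Rightarrow> nat \<Rightarrow> real) \<Rightarrow> real" where
  "detm m A = (\<Sum>p | p permutes {..<m}. of_int (sign p) * (\<Prod>i<m. A i (p i)))"

definition vandermonde :: "nat \<Rightarrow> (nat \<Rightarrow> real) \<Rightarrow> real" where
  "vandermonde m x = (\<Prod>i<m. \<Prod>j\<in>{i<..<m}. (x i - x j))"

text \<open>Multivariate Jacobi polynomial P_nu(x_1..x_m;a,b) evaluated at x 0, ..., x (m-1)
  (meaningful as the polynomial when the x i are pairwise distinct).\<close>
definition mjacobi :: "nat \<Rightarrow> (nat \<Rightarrow> nat) \<Rightarrow> real \<Rightarrow> real \<Rightarrow> (nat \<Rightarrow> real) \<Rightarrow> real" where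
  "mjacobi m \<nu> a b x =
     detm m (\<lambda>i j. jacobi (\<nu> i + m - 1 - i) a b (x j)) / vandermonde m x"

end

theory Submission
  imports Defs "Jordan_Normal_Form.Determinant"
begin

(* Write p_N = p_N(x;a,b). For a, b > -1 two contiguous relations give, with positive t_N, s_N, w_k,
     p_{N+1}(x) / p_{N+1}(1) - p_N(x) / p_N(1) = (x - 1) t_N p_N(x;a+1,b),
     p_N(x;a+1,b) = s_N (w_0 p_0(x) + ... + w_N p_N(x)).
   Put x_n = 1 in det[p_{l_i}(x_j)], l_i = lam_i + n - i. Dividing row i by p_{l_i}(1) and subtracting
   from each row the next one turns the last column into a unit vector, and the remaining entries are
   (x_j - 1) times the sum of t_N p_N(x_j;a+1,b) over l_{i+1} <= N < l_i. The factors x_j - 1 cancel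
   against the Vandermonde, so by multilinearity P_lam(x,1;a,b) is a positive combination of the
   P_mu(x;a+1,b), mu interlacing lam. Subtracting consecutive rows once more, now in the determinant
   with rows w_0 p_0 + ... + w_{k_i} p_{k_i}, makes each P_mu(x;a+1,b) a positive combination of the
   P_nu(x;a,b). *)

section \<open>Contiguous relations for Jacobi polynomials\<close>

definition jacobi_one :: "nat \<Rightarrow> real \<Rightarrow> real" where
  "jacobi_one l a = Gamma (real l + a + 1) / (Gamma (real l + 1) * Gamma (a + 1))"

definition jacobi_coeff :: "nat \<Rightarrow> real \<Rightarrow> real \<Rightarrow> nat \<Rightarrow> real" where
  "jacobi_coeff l a b k = jacobi_one l a * (pochhammer (- real l) k * pochhammer (real l + a + b + 1) k
     / (pochhammer (a + 1) k * fact k))"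

lemma jacobi_eq_coeff_sum: "jacobi l a b x = (\<Sum>k\<le>l. jacobi_coeff l a b k * ((1 - x) / 2) ^ k)"
  unfolding jacobi_def jacobi_coeff_def jacobi_one_def by (simp add: sum_distrib_left mult.assoc)

lemma jacobi_coeff_eq_0: "l < k \<Longrightarrow> jacobi_coeff l a b k = 0"
  unfolding jacobi_coeff_def using pochhammer_of_nat_eq_0_iff[of l k, where 'a=real] by simp

lemma jacobi_eq_coeff_sum_upto:
  "l \<le> M \<Longrightarrow> jacobi l a b x = (\<Sum>k\<le>M. jacobi_coeff l a b k * ((1 - x) / 2) ^ k)"
  unfolding jacobi_eq_coeff_sum by (rule sum.mono_neutral_left) (auto simp: jacobi_coeff_eq_0)

lemma Gamma_plus1_pos: "z > 0 \<Longrightarrow> Gamma (z + 1) = z * Gamma (z::real)"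
  by (rule Gamma_plus1) (auto elim!: nonpos_Ints_cases)

lemma jacobi_one_pos: "a > -1 \<Longrightarrow> jacobi_one l a > 0"
  unfolding jacobi_one_def by (auto intro!: divide_pos_pos mult_pos_pos)

lemma jacobi_one_0:
  assumes "a > -1" shows "jacobi_one 0 a = 1"
proof -
  have "Gamma (a + 1) > 0" using assms by simp
  then show ?thesis unfolding jacobi_one_def by simp
qed

lemma jacobi_one_Suc:
  "a > -1 \<Longrightarrow> jacobi_one (Suc l) a = jacobi_one l a * (real l + a + 1) / (real l + 1)"
  unfolding jacobi_one_def using Gamma_plus1_pos[of "real l + a + 1"] Gamma_plus1_pos[of "real l + 1"]
  by (simp add: field_simps add_ac)

lemma jacobi_one_shift_a:
  "a > -1 \<Longrightarrow> jacobi_one l (a + 1) = jacobi_one l a * (real l + a + 1) / (a + 1)"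
  unfolding jacobi_one_def using Gamma_plus1_pos[of "real l + a + 1"] Gamma_plus1_pos[of "a + 1"]
  by (simp add: field_simps add_ac)

lemma jacobi_at_1: "a > -1 \<Longrightarrow> jacobi l a b 1 = jacobi_one l a"
proof -
  have "jacobi l a b 1 = (\<Sum>k\<le>l. jacobi_coeff l a b k * 0 ^ k)" by (simp add: jacobi_eq_coeff_sum)
  also have "\<dots> = jacobi_coeff l a b 0"
    by (simp add: power_0_left sum.atMost_shift del: sum.atMost_Suc)
  finally show ?thesis by (simp add: jacobi_coeff_def)
qed

lemma jacobi_0: "a > -1 \<Longrightarrow> jacobi 0 a b x = 1"
  unfolding jacobi_eq_coeff_sum jacobi_coeff_def using jacobi_one_0 by simp

lemma pochhammer_shift: "pochhammer (z + 1) k * z = pochhammer z k * (z + real k)"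
  using pochhammer_rec[of z k] pochhammer_rec'[of z k] by (simp add: mult_ac)

lemma jacobi_coeff_degree_recurrence:
  assumes a: "a > -1"
  shows "real (Suc N) * jacobi_coeff (Suc N) a b k - (real N + a + 1) * jacobi_coeff N a b k =
         - (2 * real N + a + b + 2) * (case k of 0 \<Rightarrow> 0 | Suc j \<Rightarrow> jacobi_coeff N (a + 1) b j)"
proof (cases k)
  case 0
  then show ?thesis using jacobi_one_Suc[OF a, of N] a by (simp add: jacobi_coeff_def field_simps)
next
  case (Suc j)
  have e1: "pochhammer (- real (Suc N)) (Suc j) = - (real N + 1) * pochhammer (- real N) j"
    using pochhammer_rec[of "- real (Suc N)" j] by (simp add: add_ac)
  have e2: "pochhammer (- real N) (Suc j) = (real j - real N) * pochhammer (- real N) j"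
    using pochhammer_rec'[of "- real N" j] by simp
  have e3: "pochhammer (real (Suc N) + a + b + 1) (Suc j) =
      (real N + a + b + 2 + real j) * pochhammer (real N + a + b + 2) j"
    using pochhammer_rec'[of "real (Suc N) + a + b + 1" j] by (simp add: add_ac)
  have e4: "pochhammer (real N + a + b + 1) (Suc j) =
      (real N + a + b + 1) * pochhammer (real N + a + b + 2) j"
    using pochhammer_rec[of "real N + a + b + 1" j] by (simp add: add_ac)
  have e5: "pochhammer (real N + (a + 1) + b + 1) j = pochhammer (real N + a + b + 2) j"
    by (simp add: add_ac)
  have e6: "pochhammer (a + 1) (Suc j) = (a + 1) * pochhammer (a + 2) j"
    using pochhammer_rec[of "a + 1" j] by (simp add: add_ac)
  have e7: "pochhammer (a + 1 + 1) j = pochhammer (a + 2) j" by (simp add: add_ac)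
  have r: "pochhammer (a + 2) j \<noteq> 0"
    using a by (intro pochhammer_pos[THEN less_imp_neq, symmetric]) simp
  have f: "fact j \<noteq> (0::real)" by simp
  have "a + 1 \<noteq> 0" "1 + a \<noteq> 0" "real N + 1 \<noteq> 0" "1 + real j \<noteq> 0" using a by linarith+
  with r f show ?thesis
    unfolding Suc nat.case jacobi_coeff_def e1 e2 e3 e4 e5 e6 e7 fact_Suc
      jacobi_one_Suc[OF a] jacobi_one_shift_a[OF a]
    by (simp add: divide_simps) (simp add: algebra_simps)
qed

lemma jacobi_coeff_shift_a_recurrence:
  assumes a: "a > -1" and b: "b > -1"
  shows "(real (Suc m) + a + b + 1) * jacobi_coeff (Suc m) (a + 1) b k =
    (2 * real (Suc m) + a + b + 1) * jacobi_coeff (Suc m) a b k + (real (Suc m) + b) * jacobi_coeff m (a + 1) b k"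
proof -
  define M where "M = real (Suc m)"
  have M: "M > 0" "M + a + b + 1 \<noteq> 0" "real m = M - 1" using a b by (simp_all add: M_def)
  have r1: "pochhammer (- real m) k = pochhammer (- M) k * (real k - M) / (- M)"
  proof -
    have "- M + 1 = - real m" by (simp add: M_def)
    from pochhammer_shift[of "- M" k, unfolded this] M(1) show ?thesis by (simp add: field_simps)
  qed
  have r2: "pochhammer (M + (a + 1) + b + 1) k = pochhammer (M + a + b + 1) k * (M + a + b + 1 + real k) / (M + a + b + 1)"
    using pochhammer_shift[of "M + a + b + 1" k] M by (simp add: field_simps add_ac)
  have r3: "pochhammer (real m + (a + 1) + b + 1) k = pochhammer (M + a + b + 1) k"
    using M by (simp add: add_ac)
  have r4: "pochhammer (a + 1 + 1) k = pochhammer (a + 1) k * (a + 1 + real k) / (a + 1)"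
    using pochhammer_shift[of "a + 1" k] a by (simp add: field_simps add_ac)
  have g1: "jacobi_one (Suc m) (a + 1) = jacobi_one (Suc m) a * (M + a + 1) / (a + 1)"
    using jacobi_one_shift_a[OF a] by (simp add: M_def)
  have g2: "jacobi_one m (a + 1) = jacobi_one (Suc m) a * M / (a + 1)"
    using jacobi_one_Suc[OF a, of m] jacobi_one_Suc[of "a + 1" m] jacobi_one_shift_a[OF a, of m] a
    by (simp add: M_def field_simps)
  have "pochhammer (a + 1) k \<noteq> 0" "fact k \<noteq> (0::real)" "a + 1 \<noteq> 0" "a + 1 + real k \<noteq> 0"
    using a by (auto intro!: pochhammer_pos[THEN less_imp_neq, symmetric])
  with M show ?thesis
    unfolding jacobi_coeff_def r1 r2 r3 r4 g1 g2 M_def[symmetric]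
    by (simp add: divide_simps) (simp add: algebra_simps)
qed

lemma jacobi_degree_recurrence:
  assumes a: "a > -1"
  shows "real (Suc N) * jacobi (Suc N) a b x - (real N + a + 1) * jacobi N a b x =
         (2 * real N + a + b + 2) / 2 * (x - 1) * jacobi N (a + 1) b x"
proof -
  define t where "t = (1 - x) / 2"
  have "real (Suc N) * jacobi (Suc N) a b x - (real N + a + 1) * jacobi N a b x =
     (\<Sum>k\<le>Suc N. (real (Suc N) * jacobi_coeff (Suc N) a b k - (real N + a + 1) * jacobi_coeff N a b k) * t ^ k)"
    unfolding jacobi_eq_coeff_sum_upto[of N "Suc N" a b x, OF le_SucI[OF order_refl]]
    unfolding jacobi_eq_coeff_sum t_def
    by (simp add: sum_distrib_left sum_subtractf algebra_simps del: sum.atMost_Suc)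
  also have "\<dots> = (\<Sum>k\<le>Suc N. - (2 * real N + a + b + 2) *
      (case k of 0 \<Rightarrow> 0 | Suc j \<Rightarrow> jacobi_coeff N (a + 1) b j) * t ^ k)"
    using jacobi_coeff_degree_recurrence[OF a] by simp
  also have "\<dots> = (\<Sum>j\<le>N. - (2 * real N + a + b + 2) * jacobi_coeff N (a + 1) b j * t ^ Suc j)"
    by (subst sum.atMost_Suc_shift) simp
  also have "\<dots> = (2 * real N + a + b + 2) / 2 * (x - 1) * (\<Sum>j\<le>N. jacobi_coeff N (a + 1) b j * t ^ j)"
    unfolding sum_distrib_left by (intro sum.cong refl) (simp add: t_def field_simps)
  finally show ?thesis unfolding jacobi_eq_coeff_sum t_def .
qed

lemma jacobi_shift_a_recurrence:
  assumes a: "a > -1" and b: "b > -1"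
  shows "(real (Suc m) + a + b + 1) * jacobi (Suc m) (a + 1) b x =
    (2 * real (Suc m) + a + b + 1) * jacobi (Suc m) a b x + (real (Suc m) + b) * jacobi m (a + 1) b x"
  unfolding jacobi_eq_coeff_sum_upto[of m "Suc m" "a + 1" b x, OF le_SucI[OF order_refl]]
  unfolding jacobi_eq_coeff_sum sum_distrib_left sum.distrib[symmetric]
proof (intro sum.cong refl)
  fix k
  show "(real (Suc m) + a + b + 1) * (jacobi_coeff (Suc m) (a + 1) b k * ((1 - x) / 2) ^ k) =
    (2 * real (Suc m) + a + b + 1) * (jacobi_coeff (Suc m) a b k * ((1 - x) / 2) ^ k) +
    (real (Suc m) + b) * (jacobi_coeff m (a + 1) b k * ((1 - x) / 2) ^ k)"
    using arg_cong[OF jacobi_coeff_shift_a_recurrence[OF a b, of m k], of "\<lambda>z. z * ((1 - x) / 2) ^ k"]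
    by (simp only: algebra_simps)
qed

definition jacobi_shift_scale :: "real \<Rightarrow> real \<Rightarrow> nat \<Rightarrow> real" where
  "jacobi_shift_scale a b n = (\<Prod>j\<in>{1..n}. (real j + b) / (real j + a + b + 1))"

definition jacobi_shift_weight :: "real \<Rightarrow> real \<Rightarrow> nat \<Rightarrow> real" where
  "jacobi_shift_weight a b k =
     (if k = 0 then 1 else (2 * real k + a + b + 1) / ((real k + a + b + 1) * jacobi_shift_scale a b k))"

lemma jacobi_shift_scale_pos: "a > -1 \<Longrightarrow> b > -1 \<Longrightarrow> jacobi_shift_scale a b n > 0"
  unfolding jacobi_shift_scale_def by (intro prod_pos) (auto intro!: divide_pos_pos)

lemma jacobi_shift_scale_Suc:
  "jacobi_shift_scale a b (Suc n) = jacobi_shift_scale a b n * (real (Suc n) + b) / (real (Suc n) + a + b + 1)"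
  unfolding jacobi_shift_scale_def by (simp add: prod.nat_ivl_Suc')

lemma jacobi_shift_weight_pos: "a > -1 \<Longrightarrow> b > -1 \<Longrightarrow> jacobi_shift_weight a b k > 0"
  unfolding jacobi_shift_weight_def using jacobi_shift_scale_pos[of a b k]
  by (auto intro!: divide_pos_pos mult_pos_pos)

lemma jacobi_shift_a_expansion:
  assumes a: "a > -1" and b: "b > -1"
  shows "jacobi n (a + 1) b x =
    jacobi_shift_scale a b n * (\<Sum>k\<le>n. jacobi_shift_weight a b k * jacobi k a b x)"
proof (induction n)
  case 0
  then show ?case using jacobi_0[of a] jacobi_0[of "a + 1"] a
    by (simp add: jacobi_shift_scale_def jacobi_shift_weight_def)
next
  case (Suc m)
  have pos: "real (Suc m) + a + b + 1 > 0" using a b by simp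
  have "jacobi (Suc m) (a + 1) b x =
     ((2 * real (Suc m) + a + b + 1) * jacobi (Suc m) a b x + (real (Suc m) + b) * jacobi m (a + 1) b x)
      / (real (Suc m) + a + b + 1)"
    using jacobi_shift_a_recurrence[OF a b, of m x] pos by (simp add: field_simps)
  also have "\<dots> = jacobi_shift_scale a b (Suc m) * jacobi_shift_weight a b (Suc m) * jacobi (Suc m) a b x +
       jacobi_shift_scale a b (Suc m) * (\<Sum>k\<le>m. jacobi_shift_weight a b k * jacobi k a b x)"
    unfolding Suc jacobi_shift_scale_Suc jacobi_shift_weight_def
    using pos jacobi_shift_scale_pos[OF a b, of m] b
    by (simp add: divide_simps del: of_nat_Suc)
  finally show ?case by (simp add: algebra_simps)
qed

definition jacobi_step_factor :: "real \<Rightarrow> real \<Rightarrow> nat \<Rightarrow> real" where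
  "jacobi_step_factor a b N = (2 * real N + a + b + 2) / (2 * (real N + a + 1) * jacobi_one N a)"

lemma jacobi_step_factor_pos: "a > -1 \<Longrightarrow> b > -1 \<Longrightarrow> jacobi_step_factor a b N > 0"
  unfolding jacobi_step_factor_def using jacobi_one_pos[of a N]
  by (auto intro!: divide_pos_pos mult_pos_pos)

lemma jacobi_normalized_step:
  assumes a: "a > -1"
  shows "jacobi (Suc N) a b x / jacobi_one (Suc N) a - jacobi N a b x / jacobi_one N a =
    (x - 1) * jacobi_step_factor a b N * jacobi N (a + 1) b x"
proof -
  have g: "jacobi_one N a > 0" using jacobi_one_pos[OF a] .
  have n: "real N + a + 1 > 0" using a by simp
  have "jacobi (Suc N) a b x / jacobi_one (Suc N) a - jacobi N a b x / jacobi_one N a =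
    (real (Suc N) * jacobi (Suc N) a b x - (real N + a + 1) * jacobi N a b x) / ((real N + a + 1) * jacobi_one N a)"
    unfolding jacobi_one_Suc[OF a] using g n by (simp add: divide_simps)
  also have "\<dots> = (2 * real N + a + b + 2) / 2 * (x - 1) * jacobi N (a + 1) b x / ((real N + a + 1) * jacobi_one N a)"
    unfolding jacobi_degree_recurrence[OF a] ..
  also have "\<dots> = (x - 1) * jacobi_step_factor a b N * jacobi N (a + 1) b x"
    unfolding jacobi_step_factor_def using g n by (simp add: field_simps)
  finally show ?thesis .
qed

section \<open>Determinants\<close>

lemma detm_cong:
  assumes "\<And>i j. i < m \<Longrightarrow> j < m \<Longrightarrow> A i j = B i j"
  shows "detm m A = detm m B"
  unfolding detm_def
proof (intro sum.cong refl arg_cong2[where f="(*)"] prod.cong)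
  fix p i assume "p \<in> {p. p permutes {..<m}}" "i \<in> {..<m}"
  then show "A i (p i) = B i (p i)" using assms by (auto dest: permutes_in_image)
qed

lemma detm_eq_det: "detm m A = Determinant.det (Matrix.mat m m (\<lambda>(i, j). A i j))"
proof -
  have "Determinant.det (Matrix.mat m m (\<lambda>(i, j). A i j)) =
     (\<Sum>p \<in> {p. p permutes {0..<m}}. of_int (sign p) *
        (\<Prod>i = 0..<m. Matrix.mat m m (\<lambda>(i, j). A i j) $$ (i, p i)))"
    by (rule det_def') simp
  also have "\<dots> = (\<Sum>p \<in> {p. p permutes {..<m}}. of_int (sign p) * (\<Prod>i<m. A i (p i)))"
    unfolding atLeast0LessThan
  proof (intro sum.cong refl arg_cong2[where f="(*)"] prod.cong)
    fix p i assume "p \<in> {p. p permutes {..<m}}" "i \<in> {..<m}"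
    then have "p i < m" by (auto dest: permutes_in_image)
    then show "Matrix.mat m m (\<lambda>(i, j). A i j) $$ (i, p i) = A i (p i)" using \<open>i \<in> {..<m}\<close> by simp
  qed
  finally show ?thesis unfolding detm_def by simp
qed

lemma detm_sum_rows:
  assumes "\<And>i. finite (S i)"
  shows "detm m (\<lambda>i j. \<Sum>k\<in>S i. c i k * F k j) =
    (\<Sum>\<kappa>\<in>PiE {..<m} S. (\<Prod>i<m. c i (\<kappa> i)) * detm m (\<lambda>i j. F (\<kappa> i) j))"
proof -
  have "detm m (\<lambda>i j. \<Sum>k\<in>S i. c i k * F k j) =
     (\<Sum>p | p permutes {..<m}. of_int (sign p) *
        (\<Sum>\<kappa>\<in>PiE {..<m} S. \<Prod>i<m. c i (\<kappa> i) * F (\<kappa> i) (p i)))"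
    unfolding detm_def by (simp add: prod_sum_PiE assms)
  also have "\<dots> = (\<Sum>p | p permutes {..<m}. \<Sum>\<kappa>\<in>PiE {..<m} S.
        (\<Prod>i<m. c i (\<kappa> i)) * (of_int (sign p) * (\<Prod>i<m. F (\<kappa> i) (p i))))"
    by (simp add: sum_distrib_left prod.distrib mult_ac)
  also have "\<dots> = (\<Sum>\<kappa>\<in>PiE {..<m} S. \<Sum>p | p permutes {..<m}.
        (\<Prod>i<m. c i (\<kappa> i)) * (of_int (sign p) * (\<Prod>i<m. F (\<kappa> i) (p i))))"
    by (rule sum.swap)
  also have "\<dots> = (\<Sum>\<kappa>\<in>PiE {..<m} S. (\<Prod>i<m. c i (\<kappa> i)) * detm m (\<lambda>i j. F (\<kappa> i) j))"
    unfolding detm_def by (simp add: sum_distrib_left)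
  finally show ?thesis .
qed

lemma detm_scale_rows: "detm m (\<lambda>i j. e i * A i j) = (\<Prod>i<m. e i) * detm m A"
  unfolding detm_def by (simp add: prod.distrib sum_distrib_left mult_ac)

lemma detm_scale_cols: "detm m (\<lambda>i j. A i j * d j) = (\<Prod>j<m. d j) * detm m A"
proof -
  have "(\<Prod>i<m. A i (p i) * d (p i)) = (\<Prod>j<m. d j) * (\<Prod>i<m. A i (p i))"
    if "p permutes {..<m}" for p
    using prod.permute[OF that, of d] by (simp add: prod.distrib comp_def mult_ac)
  then show ?thesis unfolding detm_def by (simp add: sum_distrib_left mult_ac)
qed

lemma detm_subtract_next_rows:
  "detm m (\<lambda>i j. if Suc i < m then A i j - r i * A (Suc i) j else A i j) = detm m A"
proof -
  define U :: "real Matrix.mat" where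
    "U = Matrix.mat m m (\<lambda>(i, j). if i = j then 1 else if j = Suc i then - r i else 0)"
  define MA :: "real Matrix.mat" where "MA = Matrix.mat m m (\<lambda>(i, j). A i j)"
  have U: "U \<in> carrier_mat m m" and MA: "MA \<in> carrier_mat m m" unfolding U_def MA_def by auto
  have prod: "Matrix.mat m m (\<lambda>(i, j). if Suc i < m then A i j - r i * A (Suc i) j else A i j) = U * MA"
  proof (rule eq_matI)
    fix i j assume "i < dim_row (U * MA)" "j < dim_col (U * MA)"
    then have i: "i < m" and j: "j < m" using U MA by auto
    have "(U * MA) $$ (i, j) = (\<Sum>k \<in> {0..<m}. U $$ (i, k) * MA $$ (k, j))"
      using i j U MA by (simp add: scalar_prod_def)
    also have "\<dots> = (\<Sum>k \<in> {0..<m}. (if k = i then A i j else 0) +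
         (if k = Suc i then - r i * A (Suc i) j else 0))"
      by (intro sum.cong refl) (auto simp: U_def MA_def i j)
    finally show "Matrix.mat m m (\<lambda>(i, j). if Suc i < m then A i j - r i * A (Suc i) j else A i j) $$ (i, j)
        = (U * MA) $$ (i, j)"
      using i j by (simp add: sum.distrib)
  qed (use U MA in auto)
  have "upper_triangular U" unfolding upper_triangular_def U_def by auto
  then have "Determinant.det U = 1"
    using det_upper_triangular[OF _ U] unfolding prod_list_diag_prod using U by (simp add: U_def)
  then have "Determinant.det (U * MA) = Determinant.det MA" using det_mult[OF U MA] by simp
  then show ?thesis unfolding detm_eq_det prod MA_def by simp
qed

lemma detm_Suc_last_col:
  assumes "\<And>i. i < m \<Longrightarrow> A i m = 0"
  shows "detm (Suc m) A = A m m * detm m A"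
proof -
  define MA :: "real Matrix.mat" where "MA = Matrix.mat (Suc m) (Suc m) (\<lambda>(i, j). A i j)"
  have MA: "MA \<in> carrier_mat (Suc m) (Suc m)" unfolding MA_def by auto
  have "Determinant.det MA = (\<Sum>i<Suc m. MA $$ (i, m) * cofactor MA i m)"
    by (rule laplace_expansion_column[OF MA]) simp
  also have "\<dots> = MA $$ (m, m) * cofactor MA m m"
    using assms by (simp add: MA_def)
  also have "mat_delete MA m m = Matrix.mat m m (\<lambda>(i, j). A i j)"
    by (rule eq_matI) (auto simp: mat_delete_def MA_def)
  then have "cofactor MA m m = detm m A"
    unfolding cofactor_def detm_eq_det by simp
  finally show ?thesis unfolding detm_eq_det[of "Suc m"] MA_def[symmetric] by (simp add: MA_def)
qed

lemma detm_Suc_last_col_ones: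
  assumes "\<And>i. i \<le> m \<Longrightarrow> A i m = 1"
  shows "detm (Suc m) A = detm m (\<lambda>i j. A i j - A (Suc i) j)"
proof -
  define B where "B i j = (if Suc i < Suc m then A i j - 1 * A (Suc i) j else A i j)" for i j
  have "detm (Suc m) A = detm (Suc m) B"
    unfolding B_def by (rule detm_subtract_next_rows[symmetric])
  also have "\<dots> = B m m * detm m B"
    by (rule detm_Suc_last_col) (simp add: B_def assms)
  also have "B m m = 1" by (simp add: B_def assms)
  also have "detm m B = detm m (\<lambda>i j. A i j - A (Suc i) j)"
    by (rule detm_cong) (simp add: B_def)
  finally show ?thesis by simp
qed

lemma detm_telescoping_rows:
  assumes "\<And>i. finite (S i)"
    and "\<And>i j. Suc i < m \<Longrightarrow> j < m \<Longrightarrow> A i j - A (Suc i) j = (\<Sum>k\<in>S i. c k * F k j)"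
    and "\<And>j. j < m \<Longrightarrow> A (m - 1) j = (\<Sum>k\<in>S (m - 1). c k * F k j)"
  shows "detm m A = (\<Sum>\<kappa>\<in>PiE {..<m} S. (\<Prod>i<m. c (\<kappa> i)) * detm m (\<lambda>i j. F (\<kappa> i) j))"
proof -
  have "detm m A = detm m (\<lambda>i j. if Suc i < m then A i j - 1 * A (Suc i) j else A i j)"
    by (rule detm_subtract_next_rows[symmetric])
  also have "\<dots> = detm m (\<lambda>i j. \<Sum>k\<in>S i. c k * F k j)"
  proof (rule detm_cong)
    fix i j assume i: "i < m" and j: "j < m"
    show "(if Suc i < m then A i j - 1 * A (Suc i) j else A i j) = (\<Sum>k\<in>S i. c k * F k j)"
    proof (cases "Suc i < m")
      case True
      then show ?thesis using assms(2) j by simp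
    next
      case False
      then have "i = m - 1" using i by simp
      then show ?thesis using assms(3) j by simp
    qed
  qed
  also have "\<dots> = (\<Sum>\<kappa>\<in>PiE {..<m} S. (\<Prod>i<m. c (\<kappa> i)) * detm m (\<lambda>i j. F (\<kappa> i) j))"
    by (rule detm_sum_rows) (rule assms(1))
  finally show ?thesis .
qed

lemma vandermonde_Suc_upd:
  "vandermonde (Suc m) (x(m := t)) = vandermonde m x * (\<Prod>i<m. x i - t)"
proof -
  have "vandermonde (Suc m) (x(m := t)) =
     (\<Prod>i<m. \<Prod>j\<in>{i<..<Suc m}. (x(m := t)) i - (x(m := t)) j)"
    unfolding vandermonde_def by simp
  also have "\<dots> = (\<Prod>i<m. (x i - t) * (\<Prod>j\<in>{i<..<m}. x i - x j))"
  proof (intro prod.cong refl)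
    fix i assume i: "i \<in> {..<m}"
    have "{i<..<Suc m} = insert m {i<..<m}" using i by auto
    moreover have "(\<Prod>j\<in>{i<..<m}. (x(m := t)) i - (x(m := t)) j) = (\<Prod>j\<in>{i<..<m}. x i - x j)"
      using i by (intro prod.cong refl) auto
    ultimately show "(\<Prod>j\<in>{i<..<Suc m}. (x(m := t)) i - (x(m := t)) j) = (x i - t) * (\<Prod>j\<in>{i<..<m}. x i - x j)"
      using i by simp
  qed
  finally show ?thesis unfolding vandermonde_def by (simp add: prod.distrib mult_ac)
qed

section \<open>Specialising the last variable to 1\<close>

definition interlacing_rows :: "nat \<Rightarrow> (nat \<Rightarrow> nat) \<Rightarrow> (nat \<Rightarrow> nat) set" where
  "interlacing_rows m l = PiE {..<m} (\<lambda>i. {l (Suc i)..<l i})"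

definition dominated_rows :: "nat \<Rightarrow> (nat \<Rightarrow> nat) \<Rightarrow> (nat \<Rightarrow> nat) set" where
  "dominated_rows m \<nu> = PiE {..<m} (\<lambda>i. if Suc i < m then {\<nu> (Suc i)<..\<nu> i} else {..\<nu> i})"

lemma finite_interlacing_rows: "finite (interlacing_rows m l)"
  unfolding interlacing_rows_def by (auto intro!: finite_PiE)

lemma finite_dominated_rows: "finite (dominated_rows m \<nu>)"
  unfolding dominated_rows_def by (auto intro!: finite_PiE)

lemma interlacing_rows_decreasing:
  assumes "\<nu> \<in> interlacing_rows m l" and "Suc i < m"
  shows "\<nu> (Suc i) < \<nu> i"
  using PiE_mem[OF assms(1)[unfolded interlacing_rows_def], of i]
    PiE_mem[OF assms(1)[unfolded interlacing_rows_def], of "Suc i"] assms(2)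
  by auto

lemma dominated_rows_decreasing:
  assumes "\<kappa> \<in> dominated_rows m \<nu>" and "Suc i < m"
  shows "\<kappa> (Suc i) < \<kappa> i"
  using PiE_mem[OF assms(1)[unfolded dominated_rows_def], of i]
    PiE_mem[OF assms(1)[unfolded dominated_rows_def], of "Suc i"] assms(2)
  by (auto split: if_splits)

lemma detm_jacobi_last_var_one:
  assumes a: "a > -1" and l: "\<And>i. i < m \<Longrightarrow> l (Suc i) < l i"
  shows "detm (Suc m) (\<lambda>i j. jacobi (l i) a b ((x(m := 1)) j)) =
    (\<Prod>i<Suc m. jacobi_one (l i) a) * (\<Prod>j<m. x j - 1) *
    (\<Sum>\<nu>\<in>interlacing_rows m l.
       (\<Prod>i<m. jacobi_step_factor a b (\<nu> i)) * detm m (\<lambda>i j. jacobi (\<nu> i) (a + 1) b (x j)))"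
proof -
  define U where "U i j = jacobi (l i) a b ((x(m := 1)) j) / jacobi_one (l i) a" for i j
  have "detm (Suc m) (\<lambda>i j. jacobi (l i) a b ((x(m := 1)) j)) =
      detm (Suc m) (\<lambda>i j. jacobi_one (l i) a * U i j)"
    unfolding U_def using jacobi_one_pos[OF a] by (simp add: less_imp_neq[symmetric])
  also have "\<dots> = (\<Prod>i<Suc m. jacobi_one (l i) a) * detm (Suc m) U"
    by (rule detm_scale_rows)
  also have "detm (Suc m) U = detm m (\<lambda>i j. U i j - U (Suc i) j)"
    by (rule detm_Suc_last_col_ones)
      (simp add: U_def jacobi_at_1[OF a] jacobi_one_pos[OF a, THEN less_imp_neq, symmetric])
  also have "\<dots> = detm m (\<lambda>i j. (\<Sum>N\<in>{l (Suc i)..<l i}.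
      jacobi_step_factor a b N * jacobi N (a + 1) b (x j)) * (x j - 1))"
  proof (rule detm_cong)
    fix i j assume i: "i < m" and j: "j < m"
    have "U i j - U (Suc i) j = jacobi (l i) a b (x j) / jacobi_one (l i) a -
        jacobi (l (Suc i)) a b (x j) / jacobi_one (l (Suc i)) a"
      using j by (simp add: U_def)
    also have "\<dots> = (\<Sum>N = l (Suc i)..<l i.
        jacobi (Suc N) a b (x j) / jacobi_one (Suc N) a - jacobi N a b (x j) / jacobi_one N a)"
      using sum_Suc_diff'[OF less_imp_le[OF l[OF i]], of "\<lambda>N. jacobi N a b (x j) / jacobi_one N a"]
      by simp
    finally show "U i j - U (Suc i) j = (\<Sum>N\<in>{l (Suc i)..<l i}.
        jacobi_step_factor a b N * jacobi N (a + 1) b (x j)) * (x j - 1)"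
      unfolding jacobi_normalized_step[OF a] sum_distrib_right by (simp add: mult_ac)
  qed
  also have "\<dots> = (\<Prod>j<m. x j - 1) *
      detm m (\<lambda>i j. \<Sum>N\<in>{l (Suc i)..<l i}. jacobi_step_factor a b N * jacobi N (a + 1) b (x j))"
    by (rule detm_scale_cols)
  also have "detm m (\<lambda>i j. \<Sum>N\<in>{l (Suc i)..<l i}. jacobi_step_factor a b N * jacobi N (a + 1) b (x j)) =
    (\<Sum>\<nu>\<in>interlacing_rows m l.
       (\<Prod>i<m. jacobi_step_factor a b (\<nu> i)) * detm m (\<lambda>i j. jacobi (\<nu> i) (a + 1) b (x j)))"
    unfolding interlacing_rows_def by (rule detm_sum_rows) simp
  finally show ?thesis by (simp only: mult.assoc)
qed

lemma detm_jacobi_shift_a: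
  assumes a: "a > -1" and b: "b > -1" and \<nu>: "\<And>i. Suc i < m \<Longrightarrow> \<nu> (Suc i) \<le> \<nu> i"
  shows "detm m (\<lambda>i j. jacobi (\<nu> i) (a + 1) b (x j)) = (\<Prod>i<m. jacobi_shift_scale a b (\<nu> i)) *
    (\<Sum>\<kappa>\<in>dominated_rows m \<nu>.
       (\<Prod>i<m. jacobi_shift_weight a b (\<kappa> i)) * detm m (\<lambda>i j. jacobi (\<kappa> i) a b (x j)))"
proof -
  have "detm m (\<lambda>i j. jacobi (\<nu> i) (a + 1) b (x j)) = (\<Prod>i<m. jacobi_shift_scale a b (\<nu> i)) *
      detm m (\<lambda>i j. \<Sum>k\<le>\<nu> i. jacobi_shift_weight a b k * jacobi k a b (x j))"
    unfolding jacobi_shift_a_expansion[OF a b] by (rule detm_scale_rows)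
  also have "detm m (\<lambda>i j. \<Sum>k\<le>\<nu> i. jacobi_shift_weight a b k * jacobi k a b (x j)) =
    (\<Sum>\<kappa>\<in>dominated_rows m \<nu>.
       (\<Prod>i<m. jacobi_shift_weight a b (\<kappa> i)) * detm m (\<lambda>i j. jacobi (\<kappa> i) a b (x j)))"
    unfolding dominated_rows_def
  proof (rule detm_telescoping_rows)
    fix i j assume i: "Suc i < m"
    have split: "{..\<nu> i} = {..\<nu> (Suc i)} \<union> {\<nu> (Suc i)<..\<nu> i}" using \<nu>[OF i] by auto
    have "(\<Sum>k\<le>\<nu> i. jacobi_shift_weight a b k * jacobi k a b (x j)) =
        (\<Sum>k\<le>\<nu> (Suc i). jacobi_shift_weight a b k * jacobi k a b (x j)) +
        (\<Sum>k\<in>{\<nu> (Suc i)<..\<nu> i}. jacobi_shift_weight a b k * jacobi k a b (x j))"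
      unfolding split by (rule sum.union_disjoint) auto
    with i show "(\<Sum>k\<le>\<nu> i. jacobi_shift_weight a b k * jacobi k a b (x j)) -
        (\<Sum>k\<le>\<nu> (Suc i). jacobi_shift_weight a b k * jacobi k a b (x j)) =
      (\<Sum>k\<in>(if Suc i < m then {\<nu> (Suc i)<..\<nu> i} else {..\<nu> i}). jacobi_shift_weight a b k * jacobi k a b (x j))"
      by simp
  qed simp_all
  finally show ?thesis .
qed

lemma strict_decreasing_gap:
  fixes f :: "nat \<Rightarrow> nat"
  assumes "\<And>i. Suc i < m \<Longrightarrow> f (Suc i) < f i" and "i \<le> j" and "j < m"
  shows "f j + (j - i) \<le> f i"
  using assms(2,3)
proof (induction j rule: dec_induct)
  case (step j)
  then show ?case using assms(1)[of j] by simp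
qed simp

(* Inverse of nu |-> (nu_i + m - 1 - i)_i, the row indices in mjacobi m nu; meaningful for strictly
   decreasing exponents, where the truncated subtraction is exact. *)
definition partition_of_exponents :: "nat \<Rightarrow> (nat \<Rightarrow> nat) \<Rightarrow> nat \<Rightarrow> nat" where
  "partition_of_exponents m \<kappa> i = (if i < m then \<kappa> i - (m - 1 - i) else 0)"

lemma
  fixes \<kappa> :: "nat \<Rightarrow> nat"
  assumes "\<And>i. Suc i < m \<Longrightarrow> \<kappa> (Suc i) < \<kappa> i"
  shows is_partition_len_partition_of_exponents: "is_partition_len m (partition_of_exponents m \<kappa>)"
    and mjacobi_partition_of_exponents:
      "mjacobi m (partition_of_exponents m \<kappa>) a b x = detm m (\<lambda>i j. jacobi (\<kappa> i) a b (x j)) / vandermonde m x"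
proof -
  have gap: "\<kappa> j + (j - i) \<le> \<kappa> i" if "i \<le> j" "j < m" for i j
    using strict_decreasing_gap[where f=\<kappa> and m=m, OF assms that] .
  show "is_partition_len m (partition_of_exponents m \<kappa>)"
    unfolding is_partition_len_def partition_of_exponents_def
  proof (intro conjI allI impI)
    fix i j :: nat assume "i \<le> j"
    then show "(if j < m then \<kappa> j - (m - 1 - j) else 0) \<le> (if i < m then \<kappa> i - (m - 1 - i) else 0)"
      using gap[of i j] gap[of j "m - 1"] by auto
  qed simp
  have "partition_of_exponents m \<kappa> i + m - 1 - i = \<kappa> i" if "i < m" for i
  proof -
    have "\<kappa> (m - 1) + (m - 1 - i) \<le> \<kappa> i" using that by (intro gap) auto
    then show ?thesis using that by (simp add: partition_of_exponents_def)
  qed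
  then show "mjacobi m (partition_of_exponents m \<kappa>) a b x = detm m (\<lambda>i j. jacobi (\<kappa> i) a b (x j)) / vandermonde m x"
    unfolding mjacobi_def by (simp cong: detm_cong)
qed

definition branching_coeff ::
    "real \<Rightarrow> real \<Rightarrow> nat \<Rightarrow> (nat \<Rightarrow> nat) \<Rightarrow> (nat \<Rightarrow> nat) \<Rightarrow> (nat \<Rightarrow> nat) \<Rightarrow> real" where
  "branching_coeff a b m l \<nu> \<kappa> = (\<Prod>i<Suc m. jacobi_one (l i) a) * (\<Prod>i<m. jacobi_step_factor a b (\<nu> i)) *
     (\<Prod>i<m. jacobi_shift_scale a b (\<nu> i)) * (\<Prod>i<m. jacobi_shift_weight a b (\<kappa> i))"

lemma branching_coeff_pos: "a > -1 \<Longrightarrow> b > -1 \<Longrightarrow> branching_coeff a b m l \<nu> \<kappa> > 0"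
  unfolding branching_coeff_def
  by (intro mult_pos_pos prod_pos jacobi_one_pos jacobi_step_factor_pos jacobi_shift_scale_pos
      jacobi_shift_weight_pos)

lemma mjacobi_last_var_one:
  assumes a: "a > -1" and b: "b > -1" and lam: "is_partition_len (Suc m) lam"
    and x: "\<forall>i<m. x i \<noteq> 1"
  defines "l \<equiv> \<lambda>i. lam i + m - i"
  shows "mjacobi (Suc m) lam a b (x(m := 1)) =
    (\<Sum>z\<in>Sigma (interlacing_rows m l) (dominated_rows m).
       branching_coeff a b m l (fst z) (snd z) * mjacobi m (partition_of_exponents m (snd z)) a b x)"
proof -
  have l: "l (Suc i) < l i" if "i < m" for i
  proof -
    have "lam (Suc i) \<le> lam i" using lam unfolding is_partition_len_def by simp
    then show ?thesis using that unfolding l_def by linarith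
  qed
  have P: "(\<Prod>j<m. x j - 1) \<noteq> 0" using x by auto
  have reassoc: "g * (t * (s * (w * d))) / v = g * t * s * w * (d / v)" for g t s w d v :: real
    by simp
  have "mjacobi (Suc m) lam a b (x(m := 1)) = detm (Suc m) (\<lambda>i j. jacobi (l i) a b ((x(m := 1)) j)) /
      (vandermonde m x * (\<Prod>j<m. x j - 1))"
    unfolding mjacobi_def vandermonde_Suc_upd l_def by simp
  also have "\<dots> = (\<Prod>i<Suc m. jacobi_one (l i) a) * (\<Sum>\<nu>\<in>interlacing_rows m l.
     (\<Prod>i<m. jacobi_step_factor a b (\<nu> i)) * detm m (\<lambda>i j. jacobi (\<nu> i) (a + 1) b (x j))) / vandermonde m x"
    using detm_jacobi_last_var_one[where l = l and m = m and x = x, OF a l] P by simp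
  also have "\<dots> = (\<Sum>\<nu>\<in>interlacing_rows m l. \<Sum>\<kappa>\<in>dominated_rows m \<nu>.
      branching_coeff a b m l \<nu> \<kappa> * (detm m (\<lambda>i j. jacobi (\<kappa> i) a b (x j)) / vandermonde m x))"
    unfolding sum_distrib_left sum_divide_distrib
  proof (intro sum.cong refl)
    fix \<nu> assume \<nu>: "\<nu> \<in> interlacing_rows m l"
    have shift_a: "detm m (\<lambda>i j. jacobi (\<nu> i) (a + 1) b (x j)) = (\<Prod>i<m. jacobi_shift_scale a b (\<nu> i)) *
        (\<Sum>\<kappa>\<in>dominated_rows m \<nu>. (\<Prod>i<m. jacobi_shift_weight a b (\<kappa> i)) *
          detm m (\<lambda>i j. jacobi (\<kappa> i) a b (x j)))"
      using interlacing_rows_decreasing[OF \<nu>] by (intro detm_jacobi_shift_a a b less_imp_le)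
    show "(\<Prod>i<Suc m. jacobi_one (l i) a) * ((\<Prod>i<m. jacobi_step_factor a b (\<nu> i)) *
        detm m (\<lambda>i j. jacobi (\<nu> i) (a + 1) b (x j))) / vandermonde m x =
      (\<Sum>\<kappa>\<in>dominated_rows m \<nu>. branching_coeff a b m l \<nu> \<kappa> *
        (detm m (\<lambda>i j. jacobi (\<kappa> i) a b (x j)) / vandermonde m x))"
      unfolding shift_a sum_distrib_left sum_divide_distrib
      by (intro sum.cong refl) (simp only: branching_coeff_def reassoc)
  qed
  also have "\<dots> = (\<Sum>\<nu>\<in>interlacing_rows m l. \<Sum>\<kappa>\<in>dominated_rows m \<nu>.
      branching_coeff a b m l \<nu> \<kappa> * mjacobi m (partition_of_exponents m \<kappa>) a b x)"
  proof (intro sum.cong refl)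
    fix \<nu> \<kappa> assume "\<kappa> \<in> dominated_rows m \<nu>"
    then have "mjacobi m (partition_of_exponents m \<kappa>) a b x =
        detm m (\<lambda>i j. jacobi (\<kappa> i) a b (x j)) / vandermonde m x"
      by (intro mjacobi_partition_of_exponents dominated_rows_decreasing)
    then show "branching_coeff a b m l \<nu> \<kappa> * (detm m (\<lambda>i j. jacobi (\<kappa> i) a b (x j)) / vandermonde m x) =
        branching_coeff a b m l \<nu> \<kappa> * mjacobi m (partition_of_exponents m \<kappa>) a b x"
      by simp
  qed
  also have "\<dots> = (\<Sum>z\<in>Sigma (interlacing_rows m l) (dominated_rows m).
      branching_coeff a b m l (fst z) (snd z) * mjacobi m (partition_of_exponents m (snd z)) a b x)"
    by (subst sum.Sigma) (simp_all add: finite_interlacing_rows finite_dominated_rows case_prod_unfold)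
  finally show ?thesis .
qed

lemma sum_regroup_by_image:
  fixes C :: "'z \<Rightarrow> 'a :: semiring_0" and h :: "'z \<Rightarrow> 'b"
  assumes fin: "finite Z"
  defines "c \<equiv> \<lambda>\<nu>. \<Sum>z\<in>{z\<in>Z. h z = \<nu>}. C z"
  shows "{\<nu>. c \<nu> \<noteq> 0} \<subseteq> h ` Z"
    and "(\<Sum>z\<in>Z. C z * g (h z)) = (\<Sum>\<nu>\<in>{\<nu>. c \<nu> \<noteq> 0}. c \<nu> * g \<nu>)"
proof -
  show supp: "{\<nu>. c \<nu> \<noteq> 0} \<subseteq> h ` Z"
  proof
    fix \<nu> assume "\<nu> \<in> {\<nu>. c \<nu> \<noteq> 0}"
    then have "{z\<in>Z. h z = \<nu>} \<noteq> {}" unfolding c_def by (metis (mono_tags) mem_Collect_eq sum.empty)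
    then show "\<nu> \<in> h ` Z" by blast
  qed
  have "(\<Sum>z\<in>Z. C z * g (h z)) = (\<Sum>\<nu>\<in>h ` Z. c \<nu> * g \<nu>)"
    unfolding c_def sum_distrib_right by (subst sum.image_gen[OF fin, of _ h]) (intro sum.cong refl, auto)
  also have "\<dots> = (\<Sum>\<nu>\<in>{\<nu>. c \<nu> \<noteq> 0}. c \<nu> * g \<nu>)"
    by (rule sum.mono_neutral_right) (use fin supp in auto)
  finally show "(\<Sum>z\<in>Z. C z * g (h z)) = (\<Sum>\<nu>\<in>{\<nu>. c \<nu> \<noteq> 0}. c \<nu> * g \<nu>)" .
qed

theorem proposition7p5:
  fixes a b :: real and n :: nat and lam :: "nat \<Rightarrow> nat"
  assumes "a > -1" and "b > -1" and "n \<ge> 2"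
    and "is_partition_len n lam"
  shows "\<exists>c :: (nat \<Rightarrow> nat) \<Rightarrow> real.
           finite {\<nu>. c \<nu> \<noteq> 0} \<and>
           (\<forall>\<nu>. c \<nu> \<noteq> 0 \<longrightarrow> is_partition_len (n - 1) \<nu>) \<and>
           (\<forall>x :: nat \<Rightarrow> real.
              (\<forall>i<n-1. \<forall>j<n-1. i \<noteq> j \<longrightarrow> x i \<noteq> x j) \<and> (\<forall>i<n-1. x i \<noteq> 1) \<longrightarrow>
              mjacobi n lam a b (x(n - 1 := 1)) =
                (\<Sum>\<nu>\<in>{\<nu>. c \<nu> \<noteq> 0}. c \<nu> * mjacobi (n - 1) \<nu> a b x)) \<and>
           (\<forall>\<nu>. c \<nu> \<ge> 0)"
proof -
  obtain m where n: "n = Suc m" using assms(3) by (cases n) auto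
  with assms(4) have lam: "is_partition_len (Suc m) lam" by simp
  define l where "l = (\<lambda>i. lam i + m - i)"
  define Z where "Z = Sigma (interlacing_rows m l) (dominated_rows m)"
  define h where "h z = partition_of_exponents m (snd z)" for z :: "(nat \<Rightarrow> nat) \<times> (nat \<Rightarrow> nat)"
  define c where "c \<nu> = (\<Sum>z\<in>{z\<in>Z. h z = \<nu>}. branching_coeff a b m l (fst z) (snd z))" for \<nu>
  have fin: "finite Z"
    unfolding Z_def by (intro finite_SigmaI finite_interlacing_rows finite_dominated_rows)
  note regroup = sum_regroup_by_image[where C = "\<lambda>z. branching_coeff a b m l (fst z) (snd z)" and h = h,
      OF fin, folded c_def]
  show ?thesis
  proof (intro exI[of _ c] conjI allI impI)
    show "finite {\<nu>. c \<nu> \<noteq> 0}"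
      using regroup(1) by (rule finite_subset[OF _ finite_imageI[OF fin]])
  next
    fix \<nu> assume "c \<nu> \<noteq> 0"
    then obtain z where z: "z \<in> Z" and \<nu>: "\<nu> = h z" using regroup(1) by blast
    from z have "snd z \<in> dominated_rows m (fst z)" by (auto simp: Z_def)
    then have "is_partition_len m (h z)"
      unfolding h_def by (intro is_partition_len_partition_of_exponents dominated_rows_decreasing)
    then show "is_partition_len (n - 1) \<nu>" by (simp add: n \<nu>)
  next
    fix x :: "nat \<Rightarrow> real"
    assume "(\<forall>i<n-1. \<forall>j<n-1. i \<noteq> j \<longrightarrow> x i \<noteq> x j) \<and> (\<forall>i<n-1. x i \<noteq> 1)"
    then have "mjacobi n lam a b (x(n - 1 := 1)) =
        (\<Sum>z\<in>Z. branching_coeff a b m l (fst z) (snd z) * mjacobi m (h z) a b x)"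
      unfolding n Z_def h_def l_def using mjacobi_last_var_one[OF assms(1,2) lam] by simp
    then show "mjacobi n lam a b (x(n - 1 := 1)) = (\<Sum>\<nu>\<in>{\<nu>. c \<nu> \<noteq> 0}. c \<nu> * mjacobi (n - 1) \<nu> a b x)"
      using regroup(2)[where g = "\<lambda>\<nu>. mjacobi m \<nu> a b x"] n by simp
  next
    show "0 \<le> c \<nu>" for \<nu>
      unfolding c_def using branching_coeff_pos[OF assms(1,2)] by (simp add: less_imp_le sum_nonneg)
  qed
qed

end
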